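(* The inequality $\lambda_s(a,b)\le H(a,b)$ holds for all $a,b>0$ if and only if $s\le -4$.
   Context: For $a,b>0$ with $a\neq b$ define $$\lambda_s(a,b)=\begin{cases}\dfrac{s-1}{s+1}\cdot\dfrac{a^{s+1}+b^{s+1}-2\left(\frac{a+b}{2}\right)^{s+1}}{a^s+b^s-2\left(\frac{a+b}{2}\right)^s}, & s\in\mathbb{R}\setminus\{-1,0,1\},\\[3mm] \dfrac{2\log\frac{a+b}{2}-\log a-\log b}{\frac{1}{2a}+\frac{1}{2b}-\frac{2}{a+b}}, & s=-1,\\[3mm] \dfrac{a\log a+b\log b-(a+b)\log\frac{a+b}{2}}{2\log\frac{a+b}{2}-\log a-\log b}, & s=0,\\[3mm] \dfrac{(b-a)^2}{4\left(a\log a+b\log b-(a+b)\log\frac{a+b}{2}\right)}, & s=1,\end{cases}$$ and $\lambda_s(a,a)=a$. The harmonic mean is $H(a,b)=2(1/a+1/b)^{-1}$. *)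

theory Defs
  imports Complex_Main
begin

definition lambda_mean :: "real \<Rightarrow> real \<Rightarrow> real \<Rightarrow> real" where
  "lambda_mean s a b =
    (if a = b then a
     else if s = -1 then
       (2 * ln ((a + b) / 2) - ln a - ln b) / (1 / (2 * a) + 1 / (2 * b) - 2 / (a + b))
     else if s = 0 then
       (a * ln a + b * ln b - (a + b) * ln ((a + b) / 2)) / (2 * ln ((a + b) / 2) - ln a - ln b)
     else if s = 1 then
       (b - a)^2 / (4 * (a * ln a + b * ln b - (a + b) * ln ((a + b) / 2)))
     else
       (s - 1) / (s + 1) *
       ((a powr (s + 1) + b powr (s + 1) - 2 * ((a + b) / 2) powr (s + 1)) /
        (a powr s + b powr s - 2 * ((a + b) / 2) powr s)))"

definition harmonic_mean :: "real \<Rightarrow> real \<Rightarrow> real" where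
  "harmonic_mean a b = 2 / (1 / a + 1 / b)"

end

theory Submission imports Defs begin

text \<open>Write \<open>a = m(1-x)\<close>, \<open>b = m(1+x)\<close> with \<open>0 < x < 1\<close> and put \<open>r = -(s+1)\<close>. For
  \<open>s \<notin> {-1,0,1}\<close> one has \<open>\<lambda>\<^sub>s - H = m G0(r,x) / ((s+1) W(x))\<close>, where
  \<open>W(x) = (1-x)\<^sup>s + (1+x)\<^sup>s - 2\<close> has the sign of \<open>s(s-1)\<close> by convexity. The function
  \<open>G0(r,\<cdot>)\<close> vanishes at \<open>0\<close> together with its first three derivatives, and its fourth
  derivative \<open>G4(r,\<cdot>)\<close> is positive on \<open>(0,1)\<close> when \<open>r \<ge> 3\<close>; hence \<open>\<lambda>\<^sub>s < H\<close> for
  \<open>s \<le> -4\<close>. For \<open>s > -4\<close> the sign of \<open>G4(r,0) = 4(s+1)s(s-1)(s+4)\<close> forces \<open>\<lambda>\<^sub>s > H\<close>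
  close to the diagonal, and the exceptional exponents \<open>-1, 0, 1\<close> are settled numerically
  at \<open>(a,b) = (1,3)\<close>.\<close>

lemma pos_from_zero_by_deriv:
  fixes f f' :: "real \<Rightarrow> real"
  assumes deriv: "\<And>y. 0 \<le> y \<Longrightarrow> y < c \<Longrightarrow> (f has_real_derivative f' y) (at y)"
    and "f 0 = 0"
    and deriv_pos: "\<And>y. 0 < y \<Longrightarrow> y < c \<Longrightarrow> \<sigma> * f' y > 0"
    and y: "0 < y" "y < c"
  shows "\<sigma> * f y > 0"
proof -
  have "\<And>t. 0 \<le> t \<Longrightarrow> t \<le> y \<Longrightarrow> ((\<lambda>t. \<sigma> * f t) has_real_derivative \<sigma> * f' t) (at t)"
    using y by (auto intro!: DERIV_cmult deriv)
  then obtain z where z: "0 < z" "z < y" "\<sigma> * f y - \<sigma> * f 0 = (y - 0) * (\<sigma> * f' z)"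
    using MVT2[of 0 y "\<lambda>t. \<sigma> * f t" "\<lambda>t. \<sigma> * f' t"] y by blast
  then have "\<sigma> * f y = y * (\<sigma> * f' z)" using \<open>f 0 = 0\<close> by simp
  moreover have "\<sigma> * f' z > 0" using deriv_pos z y by simp
  ultimately show ?thesis using y by (metis mult_pos_pos)
qed

lemma powr_eq_powr_pred_mult: "0 < (y::real) \<Longrightarrow> y powr e = y powr (e - 1) * y"
  using powr_add[of y "e - 1" 1] by simp

definition G0 :: "real \<Rightarrow> real \<Rightarrow> real" where
  "G0 r x = (1-x) powr (-r) * (r*x - 2) + (1+x) powr (-r) * (-r*x - 2) + 4 + 2*r*x^2"

definition G1 :: "real \<Rightarrow> real \<Rightarrow> real" where
  "G1 r x = (1-x) powr (-r-1) * (r*(r-1)*x - r) + (1+x) powr (-r-1) * (r*(r-1)*x + r) + 4*r*x"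

definition G2 :: "real \<Rightarrow> real \<Rightarrow> real" where
  "G2 r x = (1-x) powr (-r-2) * (r^2*(r-1)*x - 2*r)
    + (1+x) powr (-r-2) * (-(r^2*(r-1))*x - 2*r) + 4*r"

definition G3 :: "real \<Rightarrow> real \<Rightarrow> real" where
  "G3 r x = (1-x) powr (-r-3) * ((r+1)*r^2*(r-1)*x + r*(r-4)*(r+1))
    + (1+x) powr (-r-3) * ((r+1)*r^2*(r-1)*x - r*(r-4)*(r+1))"

definition G4 :: "real \<Rightarrow> real \<Rightarrow> real" where
  "G4 r x = (1-x) powr (-r-4) * ((r+2)*(r+1)*r^2*(r-1)*x + 2*r*(r+1)*(r+2)*(r-3))
    + (1+x) powr (-r-4) * (-((r+2)*(r+1)*r^2*(r-1))*x + 2*r*(r+1)*(r+2)*(r-3))"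

lemma G0_deriv:
  assumes "-1 < x" "x < 1"
  shows "(G0 r has_real_derivative G1 r x) (at x)"
proof -
  have p: "0 < 1 - x" "0 < 1 + x" using assms by auto
  show ?thesis unfolding G0_def[abs_def] G1_def
    by (rule DERIV_cong, (rule derivative_eq_intros refl p | simp)+)
      (simp only: powr_eq_powr_pred_mult[OF p(1), of "-r"] powr_eq_powr_pred_mult[OF p(2), of "-r"],
       simp add: algebra_simps)
qed

lemma G1_deriv:
  assumes "-1 < x" "x < 1"
  shows "(G1 r has_real_derivative G2 r x) (at x)"
proof -
  have p: "0 < 1 - x" "0 < 1 + x" using assms by auto
  show ?thesis unfolding G1_def[abs_def] G2_def
    by (rule DERIV_cong, (rule derivative_eq_intros refl p)+)
      (simp only: powr_eq_powr_pred_mult[OF p(1), of "-r-1"] powr_eq_powr_pred_mult[OF p(2), of "-r-1"],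
       simp add: algebra_simps power2_eq_square)
qed

lemma G2_deriv:
  assumes "-1 < x" "x < 1"
  shows "(G2 r has_real_derivative G3 r x) (at x)"
proof -
  have p: "0 < 1 - x" "0 < 1 + x" using assms by auto
  show ?thesis unfolding G2_def[abs_def] G3_def
    by (rule DERIV_cong, (rule derivative_eq_intros refl p)+)
      (simp only: powr_eq_powr_pred_mult[OF p(1), of "-r-2"] powr_eq_powr_pred_mult[OF p(2), of "-r-2"],
       simp add: algebra_simps power2_eq_square)
qed

lemma G3_deriv:
  assumes "-1 < x" "x < 1"
  shows "(G3 r has_real_derivative G4 r x) (at x)"
proof -
  have p: "0 < 1 - x" "0 < 1 + x" using assms by auto
  show ?thesis unfolding G3_def[abs_def] G4_def
    by (rule DERIV_cong, (rule derivative_eq_intros refl p)+)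
      (simp only: powr_eq_powr_pred_mult[OF p(1), of "-r-3"] powr_eq_powr_pred_mult[OF p(2), of "-r-3"],
       simp add: algebra_simps power2_eq_square)
qed

lemma G0_sign_from_G4:
  assumes "c \<le> 1" and G4_sign: "\<And>y. 0 < y \<Longrightarrow> y < c \<Longrightarrow> \<sigma> * G4 r y > 0"
    and "0 < x" "x < c"
  shows "\<sigma> * G0 r x > 0"
proof -
  have G3_sign: "\<sigma> * G3 r y > 0" if "0 < y" "y < c" for y
    using pos_from_zero_by_deriv[of c "G3 r" "G4 r" \<sigma>] G3_deriv G4_sign that \<open>c \<le> 1\<close>
    by (simp add: G3_def)
  have G2_sign: "\<sigma> * G2 r y > 0" if "0 < y" "y < c" for y
    using pos_from_zero_by_deriv[of c "G2 r" "G3 r" \<sigma>] G2_deriv G3_sign that \<open>c \<le> 1\<close>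
    by (simp add: G2_def)
  have G1_sign: "\<sigma> * G1 r y > 0" if "0 < y" "y < c" for y
    using pos_from_zero_by_deriv[of c "G1 r" "G2 r" \<sigma>] G1_deriv G2_sign that \<open>c \<le> 1\<close>
    by (simp add: G1_def)
  show ?thesis
    using pos_from_zero_by_deriv[of c "G0 r" "G1 r" \<sigma>] G0_deriv G1_sign assms
    by (simp add: G0_def)
qed

lemma G4_pos:
  assumes "r \<ge> 3" "0 < x" "x < 1"
  shows "G4 r x > 0"
proof -
  have "(1+x) powr (-r-4) < (1-x) powr (-r-4)"
    by (rule powr_less_mono2_neg) (use assms in auto)
  then have odd_part: "(r+2)*(r+1)*r^2*(r-1) * x * ((1-x) powr (-r-4) - (1+x) powr (-r-4)) > 0"
    using assms by (intro mult_pos_pos) auto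
  have even_part: "2*r*(r+1)*(r+2)*(r-3) * ((1-x) powr (-r-4) + (1+x) powr (-r-4)) \<ge> 0"
    using assms by (intro mult_nonneg_nonneg) auto
  have "G4 r x = 2*r*(r+1)*(r+2)*(r-3) * ((1-x) powr (-r-4) + (1+x) powr (-r-4))
      + (r+2)*(r+1)*r^2*(r-1) * x * ((1-x) powr (-r-4) - (1+x) powr (-r-4))"
    unfolding G4_def by (simp add: algebra_simps)
  with odd_part even_part show ?thesis by linarith
qed

lemma G0_pos:
  assumes "r \<ge> 3" "0 < x" "x < 1"
  shows "G0 r x > 0"
  using G0_sign_from_G4[of 1 1 r x] G4_pos[of r] assms by auto

lemma G4_at_zero: "G4 r 0 = 4*r*(r+1)*(r+2)*(r-3)"
  by (simp add: G4_def)

lemma G0_sign_near_zero: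
  assumes "G4 r 0 \<noteq> 0"
  shows "\<exists>x. 0 < x \<and> x < 1 \<and> G4 r 0 * G0 r x > 0"
proof -
  have "isCont (\<lambda>y. G4 r 0 * G4 r y) 0"
    unfolding G4_def by (intro continuous_intros) auto
  moreover have "G4 r 0 * G4 r 0 > 0"
    using assms by (metis not_real_square_gt_zero)
  ultimately have "\<forall>\<^sub>F y in at 0. G4 r 0 * G4 r y > 0"
    by (metis isCont_def order_tendstoD(1))
  then obtain d where "d > 0" and d: "\<And>y. y \<noteq> 0 \<Longrightarrow> dist y 0 < d \<Longrightarrow> G4 r 0 * G4 r y > 0"
    unfolding eventually_at by auto
  define c where "c = min d 1"
  have "G4 r 0 * G0 r (c/2) > 0"
    by (rule G0_sign_from_G4[where c = c]) (use d \<open>d > 0\<close> in \<open>auto simp: c_def\<close>)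
  then show ?thesis using \<open>d > 0\<close> by (intro exI[of _ "c/2"]) (auto simp: c_def)
qed

lemma powr_pair_minus_two_sign:
  fixes p x :: real
  assumes "p \<noteq> 0" "p \<noteq> 1" "0 < x" "x < 1"
  shows "p*(p-1) * ((1-x) powr p + (1+x) powr p - 2) > 0"
proof -
  let ?W = "\<lambda>x. (1-x) powr p + (1+x) powr p - 2"
  let ?W1 = "\<lambda>x. - p * (1-x) powr (p-1) + p * (1+x) powr (p-1)"
  let ?W2 = "\<lambda>x. p*(p-1) * ((1-x) powr (p-2) + (1+x) powr (p-2))"
  have W_deriv: "(?W has_real_derivative ?W1 y) (at y)" if "0 \<le> y" "y < 1" for y
  proof -
    have p: "0 < 1 - y" "0 < 1 + y" using that by auto
    show ?thesis
      by (rule DERIV_cong, (rule derivative_eq_intros refl p)+) (simp add: algebra_simps)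
  qed
  have W1_deriv: "(?W1 has_real_derivative ?W2 y) (at y)" if "0 \<le> y" "y < 1" for y
  proof -
    have p: "0 < 1 - y" "0 < 1 + y" using that by auto
    have exponent: "p - 1 - 1 = p - 2" by simp
    show ?thesis
      by (rule DERIV_cong, (rule derivative_eq_intros refl p)+)
        (simp only: exponent, simp add: algebra_simps)
  qed
  have W2_sign: "p*(p-1) * ?W2 y > 0" if "0 < y" "y < 1" for y
  proof -
    have "(p*(p-1)) * (p*(p-1)) > 0"
      using assms by (metis mult_eq_0_iff not_real_square_gt_zero right_minus_eq)
    moreover have "(1-y) powr (p-2) + (1+y) powr (p-2) > 0"
      using that by (simp add: add_pos_pos)
    ultimately show ?thesis by (metis mult.assoc mult_pos_pos)
  qed
  have W1_sign: "p*(p-1) * ?W1 y > 0" if "0 < y" "y < 1" for y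
    by (rule pos_from_zero_by_deriv[where f' = ?W2 and c = 1]) (use W1_deriv W2_sign that in auto)
  show ?thesis
    by (rule pos_from_zero_by_deriv[where f' = ?W1 and c = 1]) (use W_deriv W1_sign assms in auto)
qed

lemma harmonic_mean_eq: "a > 0 \<Longrightarrow> b > 0 \<Longrightarrow> harmonic_mean a b = 2*a*b / (a+b)"
  by (simp add: harmonic_mean_def field_simps)

lemma harmonic_mean_centered:
  assumes "m > 0" "-1 < x" "x < 1"
  shows "harmonic_mean (m*(1-x)) (m*(1+x)) = m*(1-x)*(1+x)"
proof -
  have "m*(1-x) + m*(1+x) = 2*m" by (simp add: algebra_simps)
  then show ?thesis using assms by (simp add: harmonic_mean_eq)
qed

lemma lambda_mean_centered:
  assumes "m > 0" "0 < x" "x < 1" "s \<noteq> -1" "s \<noteq> 0" "s \<noteq> 1"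
  shows "lambda_mean s (m*(1-x)) (m*(1+x)) = (s-1)/(s+1) *
    (m * ((1-x) powr (s+1) + (1+x) powr (s+1) - 2) / ((1-x) powr s + (1+x) powr s - 2))"
proof -
  define A where "A = (1-x) powr s + (1+x) powr s - 2"
  define B where "B = (1-x) powr (s+1) + (1+x) powr (s+1) - 2"
  have mid: "(m*(1-x) + m*(1+x)) / 2 = m" by (simp add: algebra_simps)
  have hom: "(m*y) powr e = m powr e * y powr e" if "y > 0" for y e
    using assms that by (simp add: powr_mult)
  have m_succ: "m powr (s+1) = m powr s * m"
    using powr_eq_powr_pred_mult[of m "s+1"] \<open>m > 0\<close> by simp
  have pos: "0 < 1 - x" "0 < 1 + x" using assms by auto
  have "m*(1-x) \<noteq> m*(1+x)" using assms by simp
  then have "lambda_mean s (m*(1-x)) (m*(1+x)) = (s-1)/(s+1) * ((m powr s * (m * B)) / (m powr s * A))"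
    using assms unfolding lambda_mean_def mid hom[OF pos(1)] hom[OF pos(2)] m_succ A_def B_def
    by (simp add: algebra_simps)
  then show ?thesis using \<open>m > 0\<close> by (simp add: A_def B_def)
qed

lemma lambda_minus_harmonic_centered:
  assumes "m > 0" "0 < x" "x < 1" "s \<noteq> -1" "s \<noteq> 0" "s \<noteq> 1"
    and W: "(1-x) powr s + (1+x) powr s - 2 \<noteq> 0"
  shows "lambda_mean s (m*(1-x)) (m*(1+x)) - harmonic_mean (m*(1-x)) (m*(1+x))
     = m * G0 (-(s+1)) x / ((s+1) * ((1-x) powr s + (1+x) powr s - 2))"
proof -
  define A where "A = (1-x) powr s"
  define B where "B = (1+x) powr s"
  have A_succ: "(1-x) powr (s+1) = A*(1-x)" and B_succ: "(1+x) powr (s+1) = B*(1+x)"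
    using powr_eq_powr_pred_mult[of _ "s+1"] assms by (simp_all add: A_def B_def)
  define D where "D = (s+1) * (A + B - 2)"
  have "D \<noteq> 0" using assms by (simp add: D_def A_def B_def)
  have "lambda_mean s (m*(1-x)) (m*(1+x)) - harmonic_mean (m*(1-x)) (m*(1+x))
      = (s-1)/(s+1) * (m * (A*(1-x) + B*(1+x) - 2) / (A + B - 2)) - m*(1-x)*(1+x)"
    using assms by (simp add: lambda_mean_centered harmonic_mean_centered A_succ B_succ A_def B_def)
  also have "\<dots> = (s-1) * (m * (A*(1-x) + B*(1+x) - 2)) / D - m*(1-x)*(1+x)"
    by (simp only: times_divide_times_eq D_def)
  also have "\<dots> = ((s-1) * (m * (A*(1-x) + B*(1+x) - 2)) - m*(1-x)*(1+x) * D) / D"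
    using \<open>D \<noteq> 0\<close> by (simp add: diff_divide_distrib)
  also have "\<dots> = m * (A*(1-x)*(-(s+1)*x - 2) + B*(1+x)*((s+1)*x - 2) + 4 - 2*(s+1)*x^2) / D"
    by (simp add: D_def algebra_simps power2_eq_square)
  also have "\<dots> = m * G0 (-(s+1)) x / D"
    unfolding G0_def minus_minus A_succ B_succ by (simp add: algebra_simps)
  finally show ?thesis by (simp add: D_def A_def B_def)
qed

lemma lambda_mean_lt_harmonic_mean_ordered:
  assumes s: "s \<le> -4" and ab: "0 < a" "a < b"
  shows "lambda_mean s a b < harmonic_mean a b"
proof -
  define m where "m = (a+b)/2"
  define x where "x = (b-a)/(a+b)"
  have centered: "a = m*(1-x)" "b = m*(1+x)" and mx: "m > 0" "0 < x" "x < 1"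
    using ab by (auto simp: m_def x_def field_simps)
  have "s*(s-1) * ((1-x) powr s + (1+x) powr s - 2) > 0"
    by (rule powr_pair_minus_two_sign) (use s mx in auto)
  moreover have "s*(s-1) > 0" using s by (simp add: mult_neg_neg)
  ultimately have W: "(1-x) powr s + (1+x) powr s - 2 > 0"
    by (simp add: zero_less_mult_iff)
  have "m * G0 (-(s+1)) x > 0" using G0_pos[of "-(s+1)" x] s mx by simp
  moreover have "(s+1) * ((1-x) powr s + (1+x) powr s - 2) < 0"
    using s W by (simp add: mult_neg_pos)
  ultimately have "lambda_mean s (m*(1-x)) (m*(1+x)) - harmonic_mean (m*(1-x)) (m*(1+x)) < 0"
    using lambda_minus_harmonic_centered[of m x s] s mx W by (simp add: divide_pos_neg)
  then show ?thesis using centered by simp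
qed

lemma lambda_mean_commute: "lambda_mean s a b = lambda_mean s b a"
  by (auto simp: lambda_mean_def ac_simps power2_commute)

lemma harmonic_mean_commute: "harmonic_mean a b = harmonic_mean b a"
  by (simp add: harmonic_mean_def ac_simps)

lemma lambda_mean_le_harmonic_mean:
  assumes "s \<le> -4" "a > 0" "b > 0"
  shows "lambda_mean s a b \<le> harmonic_mean a b"
proof -
  consider "a = b" | "a < b" | "b < a" by linarith
  then show ?thesis
  proof cases
    case 1
    then show ?thesis using assms by (simp add: lambda_mean_def harmonic_mean_def)
  next
    case 2
    then show ?thesis using lambda_mean_lt_harmonic_mean_ordered[of s a b] assms by simp
  next
    case 3
    then show ?thesis
      using lambda_mean_lt_harmonic_mean_ordered[of s b a] assms
      by (simp add: lambda_mean_commute harmonic_mean_commute)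
  qed
qed

lemma lambda_mean_gt_harmonic_mean_near_diagonal:
  assumes s: "s > -4" "s \<noteq> -1" "s \<noteq> 0" "s \<noteq> 1"
  shows "\<exists>x. 0 < x \<and> x < 1 \<and> lambda_mean s (1-x) (1+x) > harmonic_mean (1-x) (1+x)"
proof -
  define r where "r = -(s+1)"
  have G4_0: "G4 r 0 = 4*(s+1)*s*(s-1)*(s+4)"
    unfolding G4_at_zero r_def by (simp add: algebra_simps)
  then obtain x where x: "0 < x" "x < 1" and G0_sign: "G4 r 0 * G0 r x > 0"
    using G0_sign_near_zero[of r] s by auto
  define W where "W = (1-x) powr s + (1+x) powr s - 2"
  have W_sign: "s*(s-1) * W > 0"
    unfolding W_def by (rule powr_pair_minus_two_sign) (use s x in auto)
  have "(G4 r 0 * G0 r x) * (s*(s-1) * W)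
      = (4*(s*(s-1))\<^sup>2*(s+4)) * (G0 r x * ((s+1) * W))"
    unfolding G4_0 by (simp add: algebra_simps power2_eq_square)
  then have "(4*(s*(s-1))\<^sup>2*(s+4)) * (G0 r x * ((s+1) * W)) > 0"
    using G0_sign W_sign by (metis mult_pos_pos)
  moreover have "4*(s*(s-1))\<^sup>2*(s+4) > 0" using s by simp
  ultimately have "G0 r x * ((s+1) * W) > 0" by (rule zero_less_mult_pos)
  then have "G0 r x / ((s+1) * W) > 0"
    by (simp add: zero_less_mult_iff zero_less_divide_iff)
  moreover have "W \<noteq> 0" using W_sign by auto
  ultimately show ?thesis
    using lambda_minus_harmonic_centered[of 1 x s] s x
    by (intro exI[of _ x]) (simp add: r_def W_def)
qed

lemma ln_2_3_bounds:
  "1/4 < 2 * ln 2 - ln (3::real)" "14 * ln 2 < 9 * ln (3::real)"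
  "4 * ln 2 < 3 * ln (3::real)" "3 * ln 3 - 4 * ln 2 < (2/3::real)"
proof -
  have ln_pow: "ln ((2::real) ^ n) = n * ln 2" "ln ((3::real) ^ n) = n * ln 3" for n
    by (simp_all add: ln_realpow)
  show "1/4 < 2 * ln 2 - ln (3::real)"
    using ln_diff_less[of 3 "2^2"] ln_pow(1)[of 2] by simp
  show "14 * ln 2 < 9 * ln (3::real)"
  proof -
    have "ln ((2::real)^14) < ln (3^9)" by simp
    then show ?thesis by (simp only: ln_pow)
  qed
  show "4 * ln 2 < 3 * ln (3::real)"
  proof -
    have "ln ((2::real)^4) < ln (3^3)" by simp
    then show ?thesis by (simp only: ln_pow)
  qed
  show "3 * ln 3 - 4 * ln 2 < (2/3::real)"
    using ln_diff_le[of "3^2" "2^3"] ln_diff_le[of 3 2] ln_pow[of 2] ln_pow[of 3] by simp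
qed

lemma harmonic_mean_lt_lambda_mean_1_3:
  assumes "s \<in> {-1, 0, 1}"
  shows "harmonic_mean 1 3 < lambda_mean s 1 3"
proof -
  have H: "harmonic_mean 1 3 = 3/2" by (simp add: harmonic_mean_def)
  have gap: "0 < 2 * ln 2 - ln (3::real)" "0 < 3 * ln 3 - 4 * ln (2::real)"
    using ln_2_3_bounds by linarith+
  consider "s = -1" | "s = 0" | "s = 1" using assms by auto
  then show ?thesis
  proof cases
    case 1
    then have "lambda_mean s 1 3 = 6 * (2 * ln 2 - ln 3)" by (simp add: lambda_mean_def)
    then show ?thesis using ln_2_3_bounds(1) by (simp add: H)
  next
    case 2
    then have "lambda_mean s 1 3 = (3 * ln 3 - 4 * ln 2) / (2 * ln 2 - ln 3)"
      by (simp add: lambda_mean_def ln_realpow[of 2 2, simplified])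
    then show ?thesis using gap ln_2_3_bounds(2) by (simp add: H pos_less_divide_eq)
  next
    case 3
    then have "lambda_mean s 1 3 = 4 / (4 * (3 * ln 3 - 4 * ln 2))"
      by (simp add: lambda_mean_def ln_realpow[of 2 2, simplified])
    then show ?thesis using gap ln_2_3_bounds(4) by (simp add: H pos_less_divide_eq)
  qed
qed

lemma lambda_mean_gt_harmonic_mean_somewhere:
  assumes "s > -4"
  shows "\<exists>a b. a > 0 \<and> b > 0 \<and> lambda_mean s a b > harmonic_mean a b"
proof (cases "s \<in> {-1, 0, 1}")
  case True
  then show ?thesis
    using harmonic_mean_lt_lambda_mean_1_3 by (intro exI[of _ 1] exI[of _ 3]) simp
next
  case False
  then obtain x where "0 < x" "x < 1" "lambda_mean s (1-x) (1+x) > harmonic_mean (1-x) (1+x)"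
    using lambda_mean_gt_harmonic_mean_near_diagonal assms by auto
  then show ?thesis by (intro exI[of _ "1-x"] exI[of _ "1+x"]) auto
qed

theorem theorem3:
  fixes s :: real
  shows "(\<forall>a b. a > 0 \<longrightarrow> b > 0 \<longrightarrow> lambda_mean s a b \<le> harmonic_mean a b) \<longleftrightarrow> s \<le> -4"
proof
  assume le: "\<forall>a b. a > 0 \<longrightarrow> b > 0 \<longrightarrow> lambda_mean s a b \<le> harmonic_mean a b"
  show "s \<le> -4"
  proof (rule ccontr)
    assume "\<not> s \<le> -4"
    then obtain a b where "a > 0" "b > 0" and gt: "lambda_mean s a b > harmonic_mean a b"
      using lambda_mean_gt_harmonic_mean_somewhere[of s] by auto
    then have "lambda_mean s a b \<le> harmonic_mean a b" using le by blast
    with gt show False by simp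
  qed
next
  assume "s \<le> -4"
  then show "\<forall>a b. a > 0 \<longrightarrow> b > 0 \<longrightarrow> lambda_mean s a b \<le> harmonic_mean a b"
    using lambda_mean_le_harmonic_mean by blast
qed

end
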